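(* Let $m\ge2$ and let $\tau$ be a labeled rooted tree on vertex set $[1,m]$. Then for all integers $n$ and $l,a\ge1$, $$E_\tau^{(l+a,n)}=\sum_{\mu\in\mathcal M_\tau}\mathcal E_\tau^{\mu}(a;\,n-l\to n).$$
   Context: Fix $\beta\in(0,1)$ and sufficiently smooth losses $L^{(s)}$ (for integer $s<0$ the corresponding terms never occur since sums are empty). $\nabla^kF$ is the $k$-th derivative (symmetric $k$-linear map). Empty sums are $0$. For a rooted tree $\tau$ whose root has children subtrees $\tau_1,\dots,\tau_\ell$ ($\ell\ge0$), integer $n$ and integer $l\ge1$, define recursively $$E_\tau^{(l,n)}(\theta)=\sum_{b=0}^{n-l}\beta^b\nabla^{\ell+1}L^{(n-l-b)}(\theta)\Big[\sum_{l_1=1}^{l+b}E_{\tau_1}^{(l_1,n)}(\theta),\dots,\sum_{l_\ell=1}^{l+b}E_{\tau_\ell}^{(l_\ell,n)}(\theta)\Big]$$ (it depends only on the isomorphism class of $\tau$). A marking $\mu$ of a labeled rooted tree $\tau$ is a set of non-root vertices such that no marked vertex has another marked vertex in its subtree (i.e., no marked vertex is a descendant of another); $\mathcal M_\tau$ is the set of all markings (including $\varnothing$). For a labeled rooted tree $\tau$ with root $r$, children $v_1,\dots,v_\ell$ of $r$, subtrees $\tau_1,\dots,\tau_\ell$ rooted at them with vertex sets $V_1,\dots,V_\ell$, a marking $\mu\in\mathcal M_\tau$, and integers $n$, $l\ge1$, $a\ge1$, define recursively $$\mathcal E_\tau^{\mu}(a;\,n-l\to n)=\sum_{b=0}^{n-l-a}\beta^b\nabla^{\ell+1}L^{(n-l-a-b)}\big[X_1,\dots,X_\ell\big],$$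 where $X_s=\sum_{l'=1}^{l}E_{\tau_s}^{(l',n)}$ if $v_s\in\mu$, and $X_s=\sum_{l'=1}^{a+b}\mathcal E_{\tau_s}^{\mu\cap V_s}(l';\,n-l\to n)$ if $v_s\notin\mu$. (For a single-vertex tree and $\mu=\varnothing$ this gives $\sum_{b=0}^{n-l-a}\beta^b\nabla L^{(n-l-a-b)}$.) *)

theory Defs
  imports Complex_Main "HOL-Library.Multiset"
begin

datatype ltree = LNode nat "ltree list"

fun root :: "ltree \<Rightarrow> nat" where
  "root (LNode x cs) = x"

fun children :: "ltree \<Rightarrow> ltree list" where
  "children (LNode x cs) = cs"

fun label_list :: "ltree \<Rightarrow> nat list" where
  "label_list (LNode x cs) = x # concat (map label_list cs)"

definition labels :: "ltree \<Rightarrow> nat set" where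
  "labels t = set (label_list t)"

definition labeled_tree_on :: "ltree \<Rightarrow> nat set \<Rightarrow> bool" where
  "labeled_tree_on t V \<longleftrightarrow> distinct (label_list t) \<and> labels t = V"

fun subtrees :: "ltree \<Rightarrow> ltree set" where
  "subtrees (LNode x cs) = insert (LNode x cs) (\<Union>c\<in>set cs. subtrees c)"

definition markings :: "ltree \<Rightarrow> nat set set" where
  "markings t = {\<mu>. \<mu> \<subseteq> labels t - {root t} \<and>
      (\<forall>s\<in>subtrees t. root s \<in> \<mu> \<longrightarrow> (labels s - {root s}) \<inter> \<mu> = {})}"

text \<open>Abstract model of the derivatives: \<open>D s \<theta> xs\<close> stands for
 \<open>\<nabla>^(length xs + 1) L^(s)(\<theta>)[xs]\<close> (a vector).\<close>

definition sym_multilinear :: "(int \<Rightarrow> 'v::real_vector \<Rightarrow> 'v list \<Rightarrow> 'v) \<Rightarrow> bool" where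
  "sym_multilinear D \<longleftrightarrow>
     (\<forall>s \<theta> xs x y ys. D s \<theta> (xs @ (x + y) # ys) = D s \<theta> (xs @ x # ys) + D s \<theta> (xs @ y # ys)) \<and>
     (\<forall>s \<theta> xs c x ys. D s \<theta> (xs @ (c *\<^sub>R x) # ys) = c *\<^sub>R D s \<theta> (xs @ x # ys)) \<and>
     (\<forall>s \<theta> xs ys. mset xs = mset ys \<longrightarrow> D s \<theta> xs = D s \<theta> ys)"

fun Etree :: "real \<Rightarrow> (int \<Rightarrow> 'v::real_vector \<Rightarrow> 'v list \<Rightarrow> 'v) \<Rightarrow> 'v \<Rightarrow> ltree \<Rightarrow> int \<Rightarrow> int \<Rightarrow> 'v" where
  "Etree \<beta> D \<theta> (LNode x cs) l n =
     (\<Sum>b\<in>{0..n-l}. \<beta> ^ nat b *\<^sub>R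
        D (n - l - b) \<theta> (map (\<lambda>c. \<Sum>l1\<in>{1..l+b}. Etree \<beta> D \<theta> c l1 n) cs))"

text \<open>\<open>calE \<beta> D \<theta> t \<mu> a n l\<close> is \<open>\<E>_t^\<mu>(a; n-l \<rightarrow> n)\<close>.\<close>

fun calE :: "real \<Rightarrow> (int \<Rightarrow> 'v::real_vector \<Rightarrow> 'v list \<Rightarrow> 'v) \<Rightarrow> 'v \<Rightarrow> ltree \<Rightarrow> nat set
              \<Rightarrow> int \<Rightarrow> int \<Rightarrow> int \<Rightarrow> 'v" where
  "calE \<beta> D \<theta> (LNode x cs) \<mu> a n l =
     (\<Sum>b\<in>{0..n-l-a}. \<beta> ^ nat b *\<^sub>R
        D (n - l - a - b) \<theta>
          (map (\<lambda>c. if root c \<in> \<mu> then (\<Sum>l'\<in>{1..l}. Etree \<beta> D \<theta> c l' n)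
                    else (\<Sum>l'\<in>{1..a+b}. calE \<beta> D \<theta> c (\<mu> \<inter> labels c) l' n l)) cs))"

end

theory Submission
  imports Defs
begin

text \<open>In \<open>E_\<tau>^(l+a,n)\<close> the argument belonging to a child
subtree \<open>\<tau>_s\<close> is \<open>\<Sum>l' = 1..l+a+b. E_\<tau>_s^(l',n)\<close>; split this range into \<open>{1..l}\<close> and
\<open>l + {1..a+b}\<close> and rewrite the second part by the induction hypothesis as a sum over the
markings of \<open>\<tau>_s\<close>. Expanding the derivative multilinearly, every term picks for each
child either the first part (the child is marked) or one marking of its subtree, and
these choices are exactly the markings of \<open>\<tau>\<close>. Neither the range of \<open>\<beta>\<close> nor the size
of the vertex set matters: the identity holds for every tree with distinct labels.\<close>

lemma labels_LNode: "labels (LNode x cs) = insert x (\<Union>c\<in>set cs. labels c)"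
  by (auto simp: labels_def)

lemma root_in_labels: "root t \<in> labels t"
  by (cases t) (auto simp: labels_def)

lemma finite_labels: "finite (labels t)"
  by (simp add: labels_def)

lemma self_in_subtrees: "t \<in> subtrees t"
  by (cases t) auto

lemma labels_subtree: "s \<in> subtrees t \<Longrightarrow> labels s \<subseteq> labels t"
  by (induction t) (auto simp: labels_LNode)

lemma finite_markings: "finite (markings t)"
  by (rule finite_subset[of _ "Pow (labels t)"]) (auto simp: markings_def finite_labels)

lemma root_not_in_marking: "\<mu> \<in> markings t \<Longrightarrow> root t \<notin> \<mu>"
  by (auto simp: markings_def)

lemma marking_subset_labels: "\<mu> \<in> markings t \<Longrightarrow> \<mu> \<subseteq> labels t"
  by (auto simp: markings_def)

definition forest_markings :: "ltree list \<Rightarrow> nat set set" where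
  "forest_markings cs = {\<mu>. \<mu> \<subseteq> (\<Union>c\<in>set cs. labels c) \<and>
     (\<forall>c\<in>set cs. \<mu> \<inter> labels c = {root c} \<or> \<mu> \<inter> labels c \<in> markings c)}"

lemma forest_markings_Nil: "forest_markings [] = {{}}"
  by (auto simp: forest_markings_def)

lemma markings_LNode:
  assumes "x \<notin> (\<Union>c\<in>set cs. labels c)"
  shows "markings (LNode x cs) = forest_markings cs"
proof
  show "markings (LNode x cs) \<subseteq> forest_markings cs"
  proof
    fix \<mu> assume \<mu>: "\<mu> \<in> markings (LNode x cs)"
    have "\<mu> \<inter> labels c = {root c} \<or> \<mu> \<inter> labels c \<in> markings c" if c: "c \<in> set cs" for c
    proof (cases "root c \<in> \<mu>")
      case True
      have "c \<in> subtrees (LNode x cs)" using c self_in_subtrees by auto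
      then have "(labels c - {root c}) \<inter> \<mu> = {}" using \<mu> True by (auto simp: markings_def)
      then show ?thesis using True root_in_labels[of c] by blast
    next
      case False
      have "(labels s - {root s}) \<inter> \<mu> = {}" if "s \<in> subtrees c" "root s \<in> \<mu>" for s
        using \<mu> that c by (auto simp: markings_def)
      then have "\<mu> \<inter> labels c \<in> markings c"
        using False by (auto simp: markings_def)
      then show ?thesis ..
    qed
    then show "\<mu> \<in> forest_markings cs"
      using \<mu> by (auto simp: forest_markings_def markings_def labels_LNode)
  qed
next
  show "forest_markings cs \<subseteq> markings (LNode x cs)"
  proof
    fix \<mu> assume \<mu>: "\<mu> \<in> forest_markings cs"
    have sub: "\<mu> \<subseteq> labels (LNode x cs) - {root (LNode x cs)}"
      using \<mu> assms by (auto simp: forest_markings_def labels_LNode)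
    have "(labels s - {root s}) \<inter> \<mu> = {}" if s: "s \<in> subtrees (LNode x cs)" "root s \<in> \<mu>" for s
    proof (cases "s = LNode x cs")
      case True
      then show ?thesis using sub s by auto
    next
      case False
      then obtain c where c: "c \<in> set cs" "s \<in> subtrees c" using s by auto
      have ls: "labels s \<subseteq> labels c" using labels_subtree[OF c(2)] .
      then have rs: "root s \<in> labels c" using root_in_labels by blast
      from \<mu> c(1) consider "\<mu> \<inter> labels c = {root c}" | "\<mu> \<inter> labels c \<in> markings c"
        by (auto simp: forest_markings_def)
      then show ?thesis
      proof cases
        case 1
        then have "root s = root c" using rs s(2) by blast
        then have "\<mu> \<inter> labels s \<subseteq> {root s}" using 1 ls by auto
        then show ?thesis by blast
      next
        case 2
        then have "(labels s - {root s}) \<inter> (\<mu> \<inter> labels c) = {}"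
          using c(2) rs s(2) by (auto simp: markings_def)
        then show ?thesis using ls by blast
      qed
    qed
    then show "\<mu> \<in> markings (LNode x cs)" using sub by (auto simp: markings_def)
  qed
qed

lemma forest_markings_Cons:
  assumes "labels c \<inter> (\<Union>c'\<in>set cs. labels c') = {}"
  shows "forest_markings (c # cs) =
    (\<lambda>(S, \<mu>). S \<union> \<mu>) ` (insert {root c} (markings c) \<times> forest_markings cs)"
proof
  show "forest_markings (c # cs) \<subseteq> (\<lambda>(S, \<mu>). S \<union> \<mu>) ` (insert {root c} (markings c) \<times> forest_markings cs)"
  proof
    fix \<mu> assume \<mu>: "\<mu> \<in> forest_markings (c # cs)"
    define \<mu>' where "\<mu>' = \<mu> \<inter> (\<Union>c'\<in>set cs. labels c')"
    have "\<mu> = (\<mu> \<inter> labels c) \<union> \<mu>'" using \<mu> by (auto simp: forest_markings_def \<mu>'_def)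
    moreover have "\<mu> \<inter> labels c \<in> insert {root c} (markings c)"
      using \<mu> by (auto simp: forest_markings_def)
    moreover have "\<mu>' \<inter> labels c' = \<mu> \<inter> labels c'" if "c' \<in> set cs" for c'
      using that by (auto simp: \<mu>'_def)
    then have "\<mu>' \<in> forest_markings cs" using \<mu> by (auto simp: forest_markings_def \<mu>'_def)
    ultimately show "\<mu> \<in> (\<lambda>(S, \<mu>). S \<union> \<mu>) ` (insert {root c} (markings c) \<times> forest_markings cs)"
      by (intro image_eqI[where x = "(\<mu> \<inter> labels c, \<mu>')"]) auto
  qed
next
  show "(\<lambda>(S, \<mu>). S \<union> \<mu>) ` (insert {root c} (markings c) \<times> forest_markings cs) \<subseteq> forest_markings (c # cs)"
  proof clarify
    fix S \<mu> assume S: "S \<in> insert {root c} (markings c)" and \<mu>: "\<mu> \<in> forest_markings cs"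
    have "S \<subseteq> labels c" using S root_in_labels[of c] by (auto simp: markings_def)
    moreover have "\<mu> \<subseteq> (\<Union>c'\<in>set cs. labels c')" using \<mu> by (auto simp: forest_markings_def)
    ultimately have "(S \<union> \<mu>) \<inter> labels c = S"
      and "\<And>c'. c' \<in> set cs \<Longrightarrow> (S \<union> \<mu>) \<inter> labels c' = \<mu> \<inter> labels c'"
      using assms by blast+
    then show "S \<union> \<mu> \<in> forest_markings (c # cs)"
      using S \<mu> \<open>S \<subseteq> labels c\<close> by (auto simp: forest_markings_def)
  qed
qed

lemma sum_forest_markings_Cons:
  assumes disj: "labels c \<inter> (\<Union>c'\<in>set cs. labels c') = {}"
  shows "(\<Sum>\<mu>\<in>forest_markings (c # cs). g \<mu>) =
    (\<Sum>S\<in>insert {root c} (markings c). \<Sum>\<mu>\<in>forest_markings cs. g (S \<union> \<mu>))"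
proof -
  have inj: "inj_on (\<lambda>(S, \<mu>). S \<union> \<mu>) (insert {root c} (markings c) \<times> forest_markings cs)"
  proof (rule inj_onI, clarify)
    fix S1 \<mu>1 S2 \<mu>2
    assume "S1 \<in> insert {root c} (markings c)" "S2 \<in> insert {root c} (markings c)"
      "\<mu>1 \<in> forest_markings cs" "\<mu>2 \<in> forest_markings cs" "S1 \<union> \<mu>1 = S2 \<union> \<mu>2"
    moreover from this have "S1 \<subseteq> labels c" "S2 \<subseteq> labels c"
      and "\<mu>1 \<subseteq> (\<Union>c'\<in>set cs. labels c')" "\<mu>2 \<subseteq> (\<Union>c'\<in>set cs. labels c')"
      using root_in_labels[of c] by (auto simp: markings_def forest_markings_def)
    ultimately show "S1 = S2 \<and> \<mu>1 = \<mu>2" using disj by blast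
  qed
  show ?thesis
    unfolding forest_markings_Cons[OF disj] sum.reindex[OF inj]
    by (simp add: sum.cartesian_product case_prod_beta)
qed

lemma sym_multilinear_add:
  "sym_multilinear D \<Longrightarrow> D s \<theta> (xs @ (x + y) # ys) = D s \<theta> (xs @ x # ys) + D s \<theta> (xs @ y # ys)"
  unfolding sym_multilinear_def by blast

lemma sym_multilinear_zero:
  assumes "sym_multilinear D"
  shows "D s \<theta> (xs @ 0 # ys) = 0"
proof -
  have "D s \<theta> (xs @ ((0::real) *\<^sub>R 0) # ys) = (0::real) *\<^sub>R D s \<theta> (xs @ 0 # ys)"
    using assms unfolding sym_multilinear_def by blast
  then show ?thesis by simp
qed

lemma sym_multilinear_sum:
  assumes "sym_multilinear D"
  shows "D s \<theta> (xs @ (\<Sum>i\<in>I. f i) # ys) = (\<Sum>i\<in>I. D s \<theta> (xs @ f i # ys))"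
proof (cases "finite I")
  case True
  then show ?thesis
    by (induction I rule: finite_induct)
       (simp_all add: sym_multilinear_zero[OF assms] sym_multilinear_add[OF assms])
qed (simp add: sym_multilinear_zero[OF assms])

definition child_choice :: "(ltree \<Rightarrow> 'v) \<Rightarrow> (ltree \<Rightarrow> nat set \<Rightarrow> 'v) \<Rightarrow> nat set \<Rightarrow> ltree \<Rightarrow> 'v" where
  "child_choice A B \<mu> c = (if root c \<in> \<mu> then A c else B c (\<mu> \<inter> labels c))"

lemma child_choice_Un_disjoint:
  "T \<inter> labels c = {} \<Longrightarrow> child_choice A B (S \<union> T) c = child_choice A B S c"
  using root_in_labels[of c] by (auto simp: child_choice_def Int_Un_distrib2)

lemma child_choice_root: "child_choice A B {root c} c = A c"
  by (simp add: child_choice_def)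

lemma child_choice_marking: "\<mu> \<in> markings c \<Longrightarrow> child_choice A B \<mu> c = B c \<mu>"
  using root_not_in_marking[of \<mu> c] marking_subset_labels[of \<mu> c]
  by (simp add: child_choice_def Int_absorb2)

lemma D_expand_forest_markings:
  assumes D: "sym_multilinear D" and dist: "distinct (concat (map label_list cs))"
  shows "D s \<theta> (pre @ map (\<lambda>c. A c + (\<Sum>\<nu>\<in>markings c. B c \<nu>)) cs) =
    (\<Sum>\<mu>\<in>forest_markings cs. D s \<theta> (pre @ map (child_choice A B \<mu>) cs))"
  using dist
proof (induction cs arbitrary: pre)
  case Nil
  then show ?case by (simp add: forest_markings_Nil)
next
  case (Cons c cs)
  let ?F = "\<lambda>c. A c + (\<Sum>\<nu>\<in>markings c. B c \<nu>)"
  have disj: "labels c \<inter> (\<Union>c'\<in>set cs. labels c') = {}"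
    using Cons.prems by (auto simp: labels_def)
  have local: "D s \<theta> (pre @ map (child_choice A B (S \<union> \<mu>)) (c # cs))
      = D s \<theta> ((pre @ [child_choice A B S c]) @ map (child_choice A B \<mu>) cs)"
    if "S \<subseteq> labels c" "\<mu> \<in> forest_markings cs" for S \<mu>
  proof -
    have "\<mu> \<inter> labels c = {}" using that(2) disj by (auto simp: forest_markings_def)
    moreover have "map (child_choice A B (S \<union> \<mu>)) cs = map (child_choice A B \<mu>) cs"
      using \<open>S \<subseteq> labels c\<close> disj
      by (subst Un_commute, intro map_cong refl child_choice_Un_disjoint) blast
    ultimately show ?thesis by (simp add: child_choice_Un_disjoint del: map_eq_conv)
  qed
  have "(\<Sum>\<mu>\<in>forest_markings (c # cs). D s \<theta> (pre @ map (child_choice A B \<mu>) (c # cs)))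
      = (\<Sum>S\<in>insert {root c} (markings c). \<Sum>\<mu>\<in>forest_markings cs.
          D s \<theta> ((pre @ [child_choice A B S c]) @ map (child_choice A B \<mu>) cs))"
    unfolding sum_forest_markings_Cons[OF disj] using root_in_labels[of c]
    by (intro sum.cong refl local) (auto dest: marking_subset_labels)
  also have "\<dots> = (\<Sum>S\<in>insert {root c} (markings c).
          D s \<theta> ((pre @ [child_choice A B S c]) @ map ?F cs))"
    using Cons.prems by (simp only: Cons.IH distinct_append concat.simps list.map)
  also have "\<dots> = D s \<theta> ((pre @ [A c]) @ map ?F cs)
      + (\<Sum>S\<in>markings c. D s \<theta> ((pre @ [B c S]) @ map ?F cs))"
  proof -
    have "{root c} \<notin> markings c" using root_not_in_marking by blast
    then show ?thesis
      by (simp add: finite_markings child_choice_root child_choice_marking cong: sum.cong)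
  qed
  also have "\<dots> = D s \<theta> (pre @ map ?F (c # cs))"
    by (simp add: sym_multilinear_add[OF D] sym_multilinear_sum[OF D])
  finally show ?case ..
qed

lemma sum_int_interval_split:
  fixes f :: "int \<Rightarrow> 'a::comm_monoid_add"
  assumes "l \<ge> 0" "k \<ge> 0"
  shows "(\<Sum>i\<in>{1..l+k}. f i) = (\<Sum>i\<in>{1..l}. f i) + (\<Sum>i\<in>{1..k}. f (l + i))"
proof -
  have "{1..l+k} = {1..l} \<union> {l+1..l+k}" using assms by auto
  then have "(\<Sum>i\<in>{1..l+k}. f i) = (\<Sum>i\<in>{1..l}. f i) + (\<Sum>i\<in>{l+1..l+k}. f i)"
    by (simp add: sum.union_disjoint)
  also have "(\<Sum>i\<in>{l+1..l+k}. f i) = (\<Sum>i\<in>{1..k}. f (l + i))"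
    by (rule sum.reindex_bij_witness[of _ "\<lambda>i. i + l" "\<lambda>i. i - l"]) auto
  finally show ?thesis .
qed

lemma Etree_add_eq_sum_markings:
  assumes D: "sym_multilinear D" and l: "l \<ge> 1"
    and "distinct (label_list t)" and "a \<ge> 1"
  shows "Etree \<beta> D \<theta> t (l + a) n = (\<Sum>\<mu>\<in>markings t. calE \<beta> D \<theta> t \<mu> a n l)"
  using assms(3,4)
proof (induction t arbitrary: a)
  case (LNode x cs)
  define A where "A = (\<lambda>c. \<Sum>l'\<in>{1..l}. Etree \<beta> D \<theta> c l' n)"
  define B where "B = (\<lambda>b c \<nu>. \<Sum>l'\<in>{1..a+b}. calE \<beta> D \<theta> c \<nu> l' n l)"
  have child: "(\<Sum>l\<^sub>1\<in>{1..l + a + b}. Etree \<beta> D \<theta> c l\<^sub>1 n) = A c + (\<Sum>\<nu>\<in>markings c. B b c \<nu>)"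
    if c: "c \<in> set cs" and b: "b \<ge> 0" for c b
  proof -
    have "(\<Sum>l\<^sub>1\<in>{1..l + (a + b)}. Etree \<beta> D \<theta> c l\<^sub>1 n)
        = A c + (\<Sum>a'\<in>{1..a+b}. Etree \<beta> D \<theta> c (l + a') n)"
      unfolding A_def using l b LNode.prems(2) by (intro sum_int_interval_split) auto
    also have "(\<Sum>a'\<in>{1..a+b}. Etree \<beta> D \<theta> c (l + a') n)
        = (\<Sum>a'\<in>{1..a+b}. \<Sum>\<nu>\<in>markings c. calE \<beta> D \<theta> c \<nu> a' n l)"
      using LNode.prems(1) c by (intro sum.cong refl LNode.IH) (auto simp: distinct_concat_iff)
    also have "\<dots> = (\<Sum>\<nu>\<in>markings c. B b c \<nu>)"
      unfolding B_def by (rule sum.swap)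
    finally show ?thesis by (simp add: add.assoc)
  qed
  have child_args: "map (\<lambda>c. \<Sum>l\<^sub>1\<in>{1..l + a + b}. Etree \<beta> D \<theta> c l\<^sub>1 n) cs
      = map (\<lambda>c. A c + (\<Sum>\<nu>\<in>markings c. B b c \<nu>)) cs" if "b \<ge> 0" for b
    using child that by simp
  have "Etree \<beta> D \<theta> (LNode x cs) (l + a) n
      = (\<Sum>b\<in>{0..n-l-a}. \<beta> ^ nat b *\<^sub>R
          D (n - l - a - b) \<theta> (map (\<lambda>c. A c + (\<Sum>\<nu>\<in>markings c. B b c \<nu>)) cs))"
    unfolding Etree.simps diff_diff_eq by (intro sum.cong refl) (simp add: child_args)
  also have "\<dots> = (\<Sum>b\<in>{0..n-l-a}. \<Sum>\<mu>\<in>forest_markings cs. \<beta> ^ nat b *\<^sub>R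
          D (n - l - a - b) \<theta> (map (child_choice A (B b) \<mu>) cs))"
    using D_expand_forest_markings[OF D, where pre = "[]"] LNode.prems(1)
    by (simp add: scaleR_sum_right)
  also have "\<dots> = (\<Sum>\<mu>\<in>markings (LNode x cs). calE \<beta> D \<theta> (LNode x cs) \<mu> a n l)"
    using LNode.prems(1)
    by (subst sum.swap) (simp add: markings_LNode labels_def child_choice_def[abs_def] A_def B_def)
  finally show ?case .
qed

theorem mainTheorem6:
  fixes \<beta> :: real
    and D :: "int \<Rightarrow> 'v::real_vector \<Rightarrow> 'v list \<Rightarrow> 'v"
    and \<theta> :: 'v
    and t :: ltree
    and m :: nat
    and n l a :: int
  assumes "0 < \<beta>" and "\<beta> < 1"
    and "sym_multilinear D"
    and "m \<ge> 2"
    and "labeled_tree_on t {1..m}"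
    and "l \<ge> 1" and "a \<ge> 1"
  shows "Etree \<beta> D \<theta> t (l + a) n = (\<Sum>\<mu>\<in>markings t. calE \<beta> D \<theta> t \<mu> a n l)"
  using assms(5) by (intro Etree_add_eq_sum_markings assms(3,6,7)) (simp add: labeled_tree_on_def)

end
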